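(* Every Stackelberg game $(G,L,F)$ admits an SCE and an SCE-PA, i.e. $\mathbf{X}^{SCE}\neq\emptyset$ and $\mathbf{X}^{SCE\text{-}PA}\neq\emptyset$.
   Context: A finite game is $G=(N,\{S_p\}_{p\in N},\{u_p\}_{p\in N})$ with players $N=\{1,\dots,n\}$, finite nonempty strategy sets $S_p$, and utilities $u_p:S\to\mathbb{R}$ on $S=\prod_{p\in N}S_p$; write $s=(s_p,s_{-p})$ with $s_{-p}\in S_{-p}=\prod_{q\neq p}S_q$. $\mathcal{X}=\Delta(S)$ is the set of probability distributions on $S$ and $u_p(x)=\sum_{s\in S}x(s)u_p(s)$ for $x\in\mathcal{X}$. For $P\subseteq N$, $\mathcal{X}^{CE}_P$ is the set of $x\in\mathcal{X}$ such that for every $p\in P$ and all $s_p\neq s_p'\in S_p$: $\sum_{s_{-p}\in S_{-p}} x(s_p,s_{-p})\,(u_p(s_p,s_{-p})-u_p(s_p',s_{-p}))\ge 0$; $\mathcal{X}^{CE}=\mathcal{X}^{CE}_N$ is the set of correlated equilibria of $G$. A Stackelberg game (SG) is a triple $(G,L,F)$ with $L\cup F=N$ and $L\cap F=\emptyset$ (leaders and followers). For $P\subseteq N$, $\Pi_P$ is the set of ordered subsets of $P$ (finite sequences of pairwise distinct elements of $P$, including the empty sequence $\varnothing$); for $\pi\in\Pi_P$ and $p\in P$ not occurring in $\pi$, $\pi p$ is $\pi$ with $p$ appended; when used as a set, $\pi$ means its set of entries. $\mathbf{X}=\prod_{\pi\in\Pi_L}\mathcal{X}^{CE}_{\pi\cup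 F}$, with elements $\mathbf{x}=[x_\pi]_{\pi\in\Pi_L}$. For $\mathbf{x}\in\mathbf{X}$ and $\pi\in\Pi_L$, $x_\pi$ is stable if $u_p(x_\pi)\ge u_p(x_{\pi p})$ for all $p\in L\setminus\pi$; $\mathbf{x}$ is stable if $x_\varnothing$ is stable, and perfectly stable if $x_\pi$ is stable for every $\pi\in\Pi_L$; $\mathbf{X}^{S}$ and $\mathbf{X}^{PS}$ denote the sets of stable and perfectly stable elements of $\mathbf{X}$. For $\mathbf{X}'\subseteq\mathbf{X}$ and $\pi\in\Pi_L$, $\mathcal{P}_{L\setminus\pi}(\mathbf{X}')$ is the set of Pareto optimal elements of $\{x'_\pi:\mathbf{x}'\in\mathbf{X}'\}$ with respect to the objectives $u_p$, $p\in L\setminus\pi$ (an element $y$ of the set is Pareto optimal if no $y'$ in the set satisfies $u_p(y')\ge u_p(y)$ for all $p\in L\setminus\pi$ with strict inequality for some such $p$). $\mathbf{x}\in\mathbf{X}$ is an SCE if $\mathbf{x}\in\mathbf{X}^S$ and $x_\varnothing\in\mathcal{P}_L(\mathbf{X}^S)$; an SCE-PA if $\mathbf{x}\in\mathbf{X}^{PS}$ and $x_\varnothing\in\mathcal{P}_L(\mathbf{X}^{PS})$; an SCE-PAPE if $\mathbf{x}\in\mathbf{X}^{PS}$ and $x_\pi\in\mathcal{P}_{L\setminus\pi}(\mathbf{X}^{PS})$ for every $\pi\in\Pi_L$. The corresponding sets are $\mathbf{X}^{SCE}$, $\mathbf{X}^{SCE\text{-}PA}$, $\mathbf{X}^{SCE\text{-}PAPE}$.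 *)

theory Defs
  imports "HOL-Analysis.Analysis"
begin

definition profiles :: "'p set \<Rightarrow> ('p \<Rightarrow> 's set) \<Rightarrow> ('p \<Rightarrow> 's) set" where
  "profiles N S = Pi\<^sub>E N S"

definition finite_game :: "'p set \<Rightarrow> ('p \<Rightarrow> 's set) \<Rightarrow> bool" where
  "finite_game N S \<longleftrightarrow> finite N \<and> (\<forall>p\<in>N. finite (S p) \<and> S p \<noteq> {})"

definition distributions :: "'p set \<Rightarrow> ('p \<Rightarrow> 's set) \<Rightarrow> (('p \<Rightarrow> 's) \<Rightarrow> real) set" where
  "distributions N S = {x. (\<forall>s\<in>profiles N S. 0 \<le> x s) \<and> (\<forall>s. s \<notin> profiles N S \<longrightarrow> x s = 0)
                          \<and> (\<Sum>s\<in>profiles N S. x s) = 1}"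

definition exp_util ::
  "'p set \<Rightarrow> ('p \<Rightarrow> 's set) \<Rightarrow> ('p \<Rightarrow> ('p \<Rightarrow> 's) \<Rightarrow> real) \<Rightarrow> 'p \<Rightarrow> (('p \<Rightarrow> 's) \<Rightarrow> real) \<Rightarrow> real" where
  "exp_util N S u p x = (\<Sum>s\<in>profiles N S. x s * u p s)"

text \<open>X^CE_P: distributions satisfying the correlated-equilibrium constraints of all players in P.
The sum over s_{-p} in S_{-p} of x(s_p,s_{-p}) is written as the sum over pure profiles s with s p = s_p.\<close>
definition CE_set ::
  "'p set \<Rightarrow> ('p \<Rightarrow> 's set) \<Rightarrow> ('p \<Rightarrow> ('p \<Rightarrow> 's) \<Rightarrow> real) \<Rightarrow> 'p set \<Rightarrow> (('p \<Rightarrow> 's) \<Rightarrow> real) set" where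
  "CE_set N S u P = {x \<in> distributions N S.
      \<forall>p\<in>P. \<forall>a\<in>S p. \<forall>b\<in>S p. a \<noteq> b \<longrightarrow>
        (\<Sum>s\<in>{s\<in>profiles N S. s p = a}. x s * (u p s - u p (s(p := b)))) \<ge> 0}"

text \<open>Ordered subsets of P: lists of pairwise distinct elements of P (including []).
For a list \<pi> and p, \<pi> p is \<pi> @ [p].\<close>
definition ordered_subsets :: "'p set \<Rightarrow> 'p list set" where
  "ordered_subsets P = {\<pi>. distinct \<pi> \<and> set \<pi> \<subseteq> P}"

definition SG_X ::
  "'p set \<Rightarrow> ('p \<Rightarrow> 's set) \<Rightarrow> ('p \<Rightarrow> ('p \<Rightarrow> 's) \<Rightarrow> real) \<Rightarrow> 'p set \<Rightarrow> 'p set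
   \<Rightarrow> ('p list \<Rightarrow> (('p \<Rightarrow> 's) \<Rightarrow> real)) set" where
  "SG_X N S u L F = (\<Pi>\<^sub>E \<pi>\<in>ordered_subsets L. CE_set N S u (set \<pi> \<union> F))"

definition stable_at ::
  "'p set \<Rightarrow> ('p \<Rightarrow> 's set) \<Rightarrow> ('p \<Rightarrow> ('p \<Rightarrow> 's) \<Rightarrow> real) \<Rightarrow> 'p set
   \<Rightarrow> ('p list \<Rightarrow> (('p \<Rightarrow> 's) \<Rightarrow> real)) \<Rightarrow> 'p list \<Rightarrow> bool" where
  "stable_at N S u L x \<pi> \<longleftrightarrow>
     (\<forall>p\<in>L - set \<pi>. exp_util N S u p (x \<pi>) \<ge> exp_util N S u p (x (\<pi> @ [p])))"

definition SG_XS ::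
  "'p set \<Rightarrow> ('p \<Rightarrow> 's set) \<Rightarrow> ('p \<Rightarrow> ('p \<Rightarrow> 's) \<Rightarrow> real) \<Rightarrow> 'p set \<Rightarrow> 'p set
   \<Rightarrow> ('p list \<Rightarrow> (('p \<Rightarrow> 's) \<Rightarrow> real)) set" where
  "SG_XS N S u L F = {x \<in> SG_X N S u L F. stable_at N S u L x []}"

definition SG_XPS ::
  "'p set \<Rightarrow> ('p \<Rightarrow> 's set) \<Rightarrow> ('p \<Rightarrow> ('p \<Rightarrow> 's) \<Rightarrow> real) \<Rightarrow> 'p set \<Rightarrow> 'p set
   \<Rightarrow> ('p list \<Rightarrow> (('p \<Rightarrow> 's) \<Rightarrow> real)) set" where
  "SG_XPS N S u L F = {x \<in> SG_X N S u L F. \<forall>\<pi>\<in>ordered_subsets L. stable_at N S u L x \<pi>}"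

definition pareto ::
  "'p set \<Rightarrow> ('p \<Rightarrow> 's set) \<Rightarrow> ('p \<Rightarrow> ('p \<Rightarrow> 's) \<Rightarrow> real) \<Rightarrow> 'p set \<Rightarrow> 'p list
   \<Rightarrow> ('p list \<Rightarrow> (('p \<Rightarrow> 's) \<Rightarrow> real)) set \<Rightarrow> (('p \<Rightarrow> 's) \<Rightarrow> real) set" where
  "pareto N S u L \<pi> X' =
     {y \<in> (\<lambda>x'. x' \<pi>) ` X'. \<not> (\<exists>y'\<in>(\<lambda>x'. x' \<pi>) ` X'.
        (\<forall>p\<in>L - set \<pi>. exp_util N S u p y' \<ge> exp_util N S u p y) \<and>
        (\<exists>p\<in>L - set \<pi>. exp_util N S u p y' > exp_util N S u p y))}"

definition SCE_set ::
  "'p set \<Rightarrow> ('p \<Rightarrow> 's set) \<Rightarrow> ('p \<Rightarrow> ('p \<Rightarrow> 's) \<Rightarrow> real) \<Rightarrow> 'p set \<Rightarrow> 'p set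
   \<Rightarrow> ('p list \<Rightarrow> (('p \<Rightarrow> 's) \<Rightarrow> real)) set" where
  "SCE_set N S u L F = {x \<in> SG_XS N S u L F. x [] \<in> pareto N S u L [] (SG_XS N S u L F)}"

definition SCE_PA_set ::
  "'p set \<Rightarrow> ('p \<Rightarrow> 's set) \<Rightarrow> ('p \<Rightarrow> ('p \<Rightarrow> 's) \<Rightarrow> real) \<Rightarrow> 'p set \<Rightarrow> 'p set
   \<Rightarrow> ('p list \<Rightarrow> (('p \<Rightarrow> 's) \<Rightarrow> real)) set" where
  "SCE_PA_set N S u L F = {x \<in> SG_XPS N S u L F. x [] \<in> pareto N S u L [] (SG_XPS N S u L F)}"

end

theory Submission
  imports Defs
begin

text \<open>A correlated equilibrium exists by the argument of Hart and Schmeidler: if the linear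
  system defining correlated equilibria had no solution in the simplex, Ville's theorem of the
  alternative would give nonnegative weights on the deviations \<open>(p, a, b)\<close> under which every pure
  profile has negative weighted regret. Reading the weights of each player as the rates of a
  Markov chain on his strategies and taking the product of stationary distributions of these
  chains produces a distribution under which the weighted regret averages to zero, a
  contradiction. Using this correlated equilibrium at every node of the Stackelberg tree gives
  a perfectly stable, hence stable, element. The stable and the perfectly stable elements form
  compact sets (closed subsets of a product of polytopes), so the leaders' total utility at the
  root attains its maximum on each, and any maximiser is Pareto optimal.\<close>

lemma compact_fun_box:
  fixes K :: "'i \<Rightarrow> 'b::topological_space set"
  assumes "\<And>i. compact (K i)"
  shows "compact {x. \<forall>i. x i \<in> K i}"
proof -
  have "compactin (product_topology (\<lambda>_. euclidean) UNIV) (PiE UNIV K)"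
    using assms by (simp add: compactin_PiE)
  moreover have "PiE UNIV K = {x. \<forall>i. x i \<in> K i}" by (auto simp: PiE_def Pi_def)
  ultimately show ?thesis by (simp add: euclidean_product_topology)
qed

lemma closed_Collect_ball_nonneg:
  fixes g :: "'i \<Rightarrow> 'a::topological_space \<Rightarrow> real"
  assumes "\<And>i. i \<in> J \<Longrightarrow> continuous_on UNIV (g i)"
  shows "closed {x. \<forall>i\<in>J. 0 \<le> g i x}"
proof -
  have "{x. \<forall>i\<in>J. 0 \<le> g i x} = (\<Inter>i\<in>J. {x. 0 \<le> g i x})" by auto
  then show ?thesis
    using assms by (auto intro!: closed_INT closed_Collect_le continuous_on_const)
qed

lemma continuous_on_coordinate [continuous_intros]:
  "continuous_on S (\<lambda>x. x i :: 'b::topological_space)"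
  by (rule continuous_on_subset[OF continuous_on_product_coordinates subset_UNIV])

lemma continuous_on_coordinate2 [continuous_intros]:
  "continuous_on S (\<lambda>x. x i j :: 'b::topological_space)"
  by (rule continuous_on_subset[OF continuous_on_product_then_coordinatewise[OF
        continuous_on_product_coordinates] subset_UNIV])

section \<open>Probability simplices\<close>

definition prob_simplex :: "'t set \<Rightarrow> ('t \<Rightarrow> real) set" where
  "prob_simplex T = {q. (\<forall>t\<in>T. 0 \<le> q t) \<and> (\<forall>t. t \<notin> T \<longrightarrow> q t = 0) \<and> sum q T = 1}"

lemma compact_prob_simplex:
  fixes T :: "'t set"
  assumes "finite T"
  shows "compact (prob_simplex T)"
proof -
  define K where "K t = (if t \<in> T then {0..1} else {0::real})" for t
  have "q t \<le> 1" if "q \<in> prob_simplex T" "t \<in> T" for q t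
    using that member_le_sum[of t T q] assms by (auto simp: prob_simplex_def)
  then have "prob_simplex T = {q. \<forall>t. q t \<in> K t} \<inter> {q. sum q T = 1}"
    by (auto simp: prob_simplex_def K_def)
  moreover have "compact {q. \<forall>t. q t \<in> K t}" by (rule compact_fun_box) (simp add: K_def)
  moreover have "closed {q :: 't \<Rightarrow> real. sum q T = 1}"
    by (intro closed_Collect_eq continuous_intros)
  ultimately show ?thesis by (simp add: compact_Int_closed)
qed

lemma vertex_in_prob_simplex:
  assumes "finite T" "t\<^sub>0 \<in> T"
  shows "(\<lambda>t. if t = t\<^sub>0 then 1 else 0) \<in> prob_simplex T"
  using assms by (simp add: prob_simplex_def)

lemma sum_mult_toward_vertex:
  fixes f q :: "'t \<Rightarrow> real"
  assumes "finite T" "t\<^sub>0 \<in> T"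
  shows "(\<Sum>t\<in>T. f t * ((1 - \<tau>) * q t + \<tau> * (if t = t\<^sub>0 then 1 else 0)))
       = (\<Sum>t\<in>T. f t * q t) + \<tau> * (f t\<^sub>0 - (\<Sum>t\<in>T. f t * q t))"
proof -
  have "(\<Sum>t\<in>T. f t * ((1 - \<tau>) * q t + \<tau> * (if t = t\<^sub>0 then 1 else 0)))
      = (\<Sum>t\<in>T. (1 - \<tau>) * (f t * q t) + \<tau> * (if t = t\<^sub>0 then f t\<^sub>0 else 0))"
    by (rule sum.cong) (auto simp: algebra_simps)
  also have "\<dots> = (1 - \<tau>) * (\<Sum>t\<in>T. f t * q t) + \<tau> * f t\<^sub>0"
    using assms by (simp add: sum.distrib sum_distrib_left[symmetric])
  finally show ?thesis by (simp add: algebra_simps)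
qed

lemma convex_comb_in_prob_simplex:
  assumes "q \<in> prob_simplex T" "r \<in> prob_simplex T" "0 \<le> \<tau>" "\<tau> \<le> 1"
  shows "(\<lambda>t. (1 - \<tau>) * q t + \<tau> * r t) \<in> prob_simplex T"
  using assms by (auto simp: prob_simplex_def sum.distrib sum_distrib_left[symmetric])

lemma sum_prob_weights_neg:
  fixes q f :: "'t \<Rightarrow> real"
  assumes "finite T" "T \<noteq> {}" "\<forall>t\<in>T. 0 \<le> q t" "sum q T = 1" "\<And>t. t \<in> T \<Longrightarrow> f t < 0"
  shows "(\<Sum>t\<in>T. q t * f t) < 0"
proof -
  have "(\<Sum>t\<in>T. q t * f t) \<le> (\<Sum>t\<in>T. q t * Max (f ` T))"
    using assms(1,3) by (intro sum_mono mult_left_mono) auto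
  also have "\<dots> = Max (f ` T)" using assms(4) by (simp add: sum_distrib_right[symmetric])
  also have "\<dots> < 0" using assms(1,2,5) by simp
  finally show ?thesis .
qed

section \<open>Ville's theorem of the alternative\<close>

definition neg_part :: "real \<Rightarrow> real" where
  "neg_part v = max 0 (- v)"

lemma neg_part_nonneg: "0 \<le> neg_part v"
  by (simp add: neg_part_def)

lemma neg_part_mult_self: "neg_part v * v = - (neg_part v)\<^sup>2"
  by (simp add: neg_part_def power2_eq_square max_def)

lemma neg_part_add_sq_le: "(neg_part (v + x))\<^sup>2 \<le> (neg_part v - x)\<^sup>2"
proof (cases "v + x \<ge> 0")
  case False
  then have "0 \<le> - v - x" "- v - x \<le> neg_part v - x" by (auto simp: neg_part_def)
  then show ?thesis using False by (simp add: neg_part_def power_mono)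
qed (simp add: neg_part_def)

lemma sum_neg_part_sq_perturb:
  "(\<Sum>i\<in>I. (neg_part (v i + \<tau> * d i))\<^sup>2)
    \<le> (\<Sum>i\<in>I. (neg_part (v i))\<^sup>2) - 2 * \<tau> * (\<Sum>i\<in>I. neg_part (v i) * d i) + \<tau>\<^sup>2 * (\<Sum>i\<in>I. (d i)\<^sup>2)"
proof -
  have "(\<Sum>i\<in>I. (neg_part (v i + \<tau> * d i))\<^sup>2) \<le> (\<Sum>i\<in>I. (neg_part (v i) - \<tau> * d i)\<^sup>2)"
    by (intro sum_mono neg_part_add_sq_le)
  also have "\<dots> = (\<Sum>i\<in>I. (neg_part (v i))\<^sup>2 - 2 * \<tau> * (neg_part (v i) * d i) + \<tau>\<^sup>2 * (d i)\<^sup>2)"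
    by (intro sum.cong) (simp_all add: power2_diff power_mult_distrib)
  finally show ?thesis by (simp add: sum.distrib sum_subtractf sum_distrib_left)
qed

lemma nonpos_if_quadratic_bound:
  fixes a b :: real
  assumes "\<And>\<tau>. 0 < \<tau> \<Longrightarrow> \<tau> \<le> 1 \<Longrightarrow> 2 * \<tau> * a \<le> \<tau>\<^sup>2 * b"
  shows "a \<le> 0"
proof (rule ccontr)
  assume "\<not> a \<le> 0"
  then have a: "a > 0" by simp
  with assms[of 1] have b: "2 * a \<le> b" by simp
  have "2 * (a / b) * a \<le> (a / b)\<^sup>2 * b"
    using a b by (intro assms) auto
  then have "2 * a \<le> a" using a b by (simp add: power2_eq_square field_simps)
  with a show False by simp
qed

text \<open>The dual certificate is read off a minimiser of
  the squared violation \<open>\<Sum>i. neg_part (A q)\<^sub>i\<^sup>2\<close> over the simplex: moving the minimiser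
  towards any vertex \<open>t\<close> cannot decrease the violation, which forces \<open>(w A)\<^sub>t < 0\<close> for
  \<open>w = neg_part (A q)\<close>.\<close>
lemma ville_alternative:
  fixes T :: "'t set" and I :: "'i set" and A :: "'i \<Rightarrow> 't \<Rightarrow> real"
  assumes T: "finite T" "T \<noteq> {}" and I: "finite I"
  shows "(\<exists>q\<in>prob_simplex T. \<forall>i\<in>I. 0 \<le> (\<Sum>t\<in>T. A i t * q t))
       \<or> (\<exists>w. (\<forall>i\<in>I. 0 \<le> w i) \<and> (\<forall>t\<in>T. (\<Sum>i\<in>I. w i * A i t) < 0))"
proof -
  define f where "f q = (\<Sum>i\<in>I. (neg_part (\<Sum>t\<in>T. A i t * q t))\<^sup>2)" for q :: "'t \<Rightarrow> real"
  have "continuous_on (prob_simplex T) f" unfolding f_def neg_part_def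
    by (intro continuous_intros)
  moreover obtain t\<^sub>0 where "t\<^sub>0 \<in> T" using T by blast
  then have "prob_simplex T \<noteq> {}" using vertex_in_prob_simplex[OF T(1)] by blast
  ultimately obtain q\<^sub>0 where q\<^sub>0: "q\<^sub>0 \<in> prob_simplex T"
    and q\<^sub>0_min: "\<And>q. q \<in> prob_simplex T \<Longrightarrow> f q\<^sub>0 \<le> f q"
    using continuous_attains_inf[OF compact_prob_simplex[OF T(1)]] by blast
  define v where "v i = (\<Sum>t\<in>T. A i t * q\<^sub>0 t)" for i
  define w where "w i = neg_part (v i)" for i
  have f_q\<^sub>0: "f q\<^sub>0 = (\<Sum>i\<in>I. (w i)\<^sup>2)" by (simp add: f_def w_def v_def)
  show ?thesis
  proof (cases "\<forall>i\<in>I. 0 \<le> v i")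
    case True
    then show ?thesis using q\<^sub>0 unfolding v_def by blast
  next
    case False
    then obtain i where "i \<in> I" "v i < 0" by auto
    then have "0 < f q\<^sub>0"
      unfolding f_q\<^sub>0 by (intro sum_pos2[OF I]) (auto simp: w_def neg_part_def)
    have "\<forall>t\<^sub>1\<in>T. (\<Sum>i\<in>I. w i * A i t\<^sub>1) < 0"
    proof
      fix t\<^sub>1 assume t\<^sub>1: "t\<^sub>1 \<in> T"
      define d where "d i = A i t\<^sub>1 - v i" for i
      have "2 * \<tau> * (\<Sum>i\<in>I. w i * d i) \<le> \<tau>\<^sup>2 * (\<Sum>i\<in>I. (d i)\<^sup>2)"
        if "0 < \<tau>" "\<tau> \<le> 1" for \<tau>
      proof -
        define q where "q t = (1 - \<tau>) * q\<^sub>0 t + \<tau> * (if t = t\<^sub>1 then 1 else 0)" for t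
        have "q \<in> prob_simplex T"
          unfolding q_def using that q\<^sub>0 vertex_in_prob_simplex[OF T(1) t\<^sub>1]
          by (intro convex_comb_in_prob_simplex) auto
        have "f q\<^sub>0 \<le> f q" using \<open>q \<in> prob_simplex T\<close> by (rule q\<^sub>0_min)
        also have "f q = (\<Sum>i\<in>I. (neg_part (v i + \<tau> * d i))\<^sup>2)"
          unfolding f_def q_def v_def d_def by (simp add: sum_mult_toward_vertex[OF T(1) t\<^sub>1])
        also have "\<dots> \<le> f q\<^sub>0 - 2 * \<tau> * (\<Sum>i\<in>I. w i * d i) + \<tau>\<^sup>2 * (\<Sum>i\<in>I. (d i)\<^sup>2)"
          unfolding f_q\<^sub>0 w_def by (rule sum_neg_part_sq_perturb)
        finally show ?thesis by simp
      qed
      then have "(\<Sum>i\<in>I. w i * d i) \<le> 0" by (rule nonpos_if_quadratic_bound)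
      moreover have "(\<Sum>i\<in>I. w i * d i) = (\<Sum>i\<in>I. w i * A i t\<^sub>1) + f q\<^sub>0"
        by (simp add: d_def f_q\<^sub>0 right_diff_distrib sum_subtractf w_def neg_part_mult_self
            sum.distrib)
      ultimately show "(\<Sum>i\<in>I. w i * A i t\<^sub>1) < 0" using \<open>0 < f q\<^sub>0\<close> by simp
    qed
    moreover have "\<forall>i\<in>I. 0 \<le> w i" by (simp add: w_def neg_part_nonneg)
    ultimately show ?thesis by (intro disjI2 exI[where x = w]) blast
  qed
qed

section \<open>Stationary distributions of Markov chains\<close>

text \<open>\<open>q\<close> is an invariant measure of the Markov chain on \<open>T\<close> with transition rates \<open>w\<close>:
  at every state the outflow equals the inflow.\<close>
definition flow_balanced :: "'t set \<Rightarrow> ('t \<Rightarrow> 't \<Rightarrow> real) \<Rightarrow> ('t \<Rightarrow> real) \<Rightarrow> bool" where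
  "flow_balanced T w q \<longleftrightarrow> (\<forall>b\<in>T. q b * (\<Sum>a\<in>T. w b a) = (\<Sum>a\<in>T. q a * w a b))"

text \<open>Entry \<open>(b, a)\<close> of the transposed generator matrix of that chain.\<close>
definition rate_generator :: "'t set \<Rightarrow> ('t \<Rightarrow> 't \<Rightarrow> real) \<Rightarrow> 't \<Rightarrow> 't \<Rightarrow> real" where
  "rate_generator T w b a = w a b - (if a = b then (\<Sum>c\<in>T. w a c) else 0)"

lemma sum_mult_rate_generator:
  assumes "finite T" "b \<in> T"
  shows "(\<Sum>a\<in>T. z a * rate_generator T w b a) = (\<Sum>a\<in>T. z a * w a b) - z b * (\<Sum>c\<in>T. w b c)"
proof -
  have "(\<Sum>a\<in>T. z a * rate_generator T w b a)
      = (\<Sum>a\<in>T. z a * w a b) - (\<Sum>a\<in>T. if a = b then z b * (\<Sum>c\<in>T. w b c) else 0)"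
    unfolding sum_subtractf[symmetric]
    by (intro sum.cong) (auto simp: rate_generator_def right_diff_distrib)
  then show ?thesis using assms by simp
qed

lemma flow_balanced_iff_rate_generator:
  "finite T \<Longrightarrow> flow_balanced T w q \<longleftrightarrow> (\<forall>b\<in>T. (\<Sum>a\<in>T. q a * rate_generator T w b a) = 0)"
  by (auto simp: flow_balanced_def sum_mult_rate_generator)

lemma sum_rate_generator_mult:
  assumes "finite T" "t \<in> T"
  shows "(\<Sum>b\<in>T. z b * rate_generator T w b t) = (\<Sum>b\<in>T. w t b * (z b - z t))"
proof -
  have "(\<Sum>b\<in>T. z b * rate_generator T w b t)
      = (\<Sum>b\<in>T. z b * w t b) - (\<Sum>b\<in>T. if b = t then z t * (\<Sum>c\<in>T. w t c) else 0)"
    unfolding sum_subtractf[symmetric]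
    by (intro sum.cong) (auto simp: rate_generator_def right_diff_distrib)
  also have "\<dots> = (\<Sum>b\<in>T. z b * w t b) - (\<Sum>b\<in>T. z t * w t b)"
    using assms by (simp add: sum_distrib_left)
  also have "\<dots> = (\<Sum>b\<in>T. w t b * (z b - z t))"
    unfolding sum_subtractf[symmetric] by (simp add: right_diff_distrib mult.commute)
  finally show ?thesis .
qed

lemma ex_weighted_increments_nonpos:
  fixes z :: "'t \<Rightarrow> real"
  assumes T: "finite T" "T \<noteq> {}" and w: "\<And>a b. a \<in> T \<Longrightarrow> b \<in> T \<Longrightarrow> 0 \<le> w a b"
  shows "\<exists>t\<in>T. (\<Sum>b\<in>T. w t b * (z b - z t)) \<le> 0"
proof -
  have "Max (z ` T) \<in> z ` T" using T by simp
  then obtain t where t: "t \<in> T" and z_t: "z t = Max (z ` T)" by (metis imageE)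
  have "z b \<le> z t" if "b \<in> T" for b
    unfolding z_t using Max_ge[of "z ` T" "z b"] T(1) that by blast
  then have "(\<Sum>b\<in>T. w t b * (z b - z t)) \<le> 0"
    using t w by (intro sum_nonpos mult_nonneg_nonpos) auto
  with t show ?thesis by blast
qed

lemma flow_balanced_distribution_exists:
  fixes T :: "'t set" and w :: "'t \<Rightarrow> 't \<Rightarrow> real"
  assumes T: "finite T" "T \<noteq> {}" and w: "\<And>a b. a \<in> T \<Longrightarrow> b \<in> T \<Longrightarrow> 0 \<le> w a b"
  shows "\<exists>q\<in>prob_simplex T. flow_balanced T w q"
proof -
  let ?G = "rate_generator T w"
  text \<open>Ville's alternative for the equations \<open>?G q = 0\<close>, written as two inequalities each.\<close>
  define A where "A = (\<lambda>(b, pos) a. if pos then ?G b a else - ?G b a)"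
  have "finite (T \<times> (UNIV :: bool set))" using T(1) by simp
  from ville_alternative[OF T this, of A] show ?thesis
  proof
    assume "\<exists>q\<in>prob_simplex T. \<forall>i\<in>T \<times> UNIV. 0 \<le> (\<Sum>t\<in>T. A i t * q t)"
    then obtain q where q: "q \<in> prob_simplex T"
      and Aq: "\<And>i. i \<in> T \<times> UNIV \<Longrightarrow> 0 \<le> (\<Sum>t\<in>T. A i t * q t)" by blast
    have "(\<Sum>a\<in>T. q a * ?G b a) = 0" if "b \<in> T" for b
      using Aq[of "(b, True)"] Aq[of "(b, False)"] that
      by (simp add: A_def sum_negf mult.commute)
    with q T(1) show ?thesis by (auto simp: flow_balanced_iff_rate_generator)
  next
    assume "\<exists>y. (\<forall>i\<in>T \<times> UNIV. 0 \<le> y i) \<and> (\<forall>t\<in>T. (\<Sum>i\<in>T \<times> UNIV. y i * A i t) < 0)"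
    then obtain y where yA: "\<And>t. t \<in> T \<Longrightarrow> (\<Sum>i\<in>T \<times> UNIV. y i * A i t) < 0" by blast
    define z where "z b = y (b, False) - y (b, True)" for b
    have yA_eq: "(\<Sum>i\<in>T \<times> UNIV. y i * A i t) = - (\<Sum>b\<in>T. z b * ?G b t)" for t
    proof -
      have "(\<Sum>i\<in>T \<times> UNIV. y i * A i t) = (\<Sum>b\<in>T. \<Sum>pos\<in>UNIV. y (b, pos) * A (b, pos) t)"
        by (simp add: sum.cartesian_product case_prod_unfold)
      also have "\<dots> = (\<Sum>b\<in>T. - (z b * ?G b t))"
        by (intro sum.cong) (simp_all add: UNIV_bool A_def z_def left_diff_distrib)
      finally show ?thesis by (simp add: sum_negf)
    qed
    have increments_pos: "0 < (\<Sum>b\<in>T. w t b * (z b - z t))" if "t \<in> T" for t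
      using yA[OF that] yA_eq[of t] sum_rate_generator_mult[OF T(1) that, where z = z and w = w]
      by linarith
    obtain t where "t \<in> T" "(\<Sum>b\<in>T. w t b * (z b - z t)) \<le> 0"
      using ex_weighted_increments_nonpos[where T = T and w = w and z = z] T w by blast
    with increments_pos[of t] show ?thesis by linarith
  qed
qed

section \<open>Existence of correlated equilibria\<close>

definition regret :: "('p \<Rightarrow> ('p \<Rightarrow> 's) \<Rightarrow> real) \<Rightarrow> 'p \<Rightarrow> 's \<Rightarrow> 's \<Rightarrow> ('p \<Rightarrow> 's) \<Rightarrow> real" where
  "regret u p a b s = (if s p = a then u p s - u p (s(p := b)) else 0)"

lemma regret_self [simp]: "regret u p a a s = 0"
  by (auto simp: regret_def)

lemma distributions_eq_prob_simplex: "distributions N S = prob_simplex (profiles N S)"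
  by (simp add: distributions_def prob_simplex_def)

lemma finite_profiles: "finite_game N S \<Longrightarrow> finite (profiles N S)"
  by (auto simp: finite_game_def profiles_def intro!: finite_PiE)

lemma profiles_nonempty: "finite_game N S \<Longrightarrow> profiles N S \<noteq> {}"
  by (auto simp: finite_game_def profiles_def PiE_eq_empty_iff)

text \<open>The constraints with \<open>a = b\<close> vanish identically, so the side condition \<open>a \<noteq> b\<close> of
  \<open>CE_set\<close> can be dropped.\<close>
lemma CE_set_eq_regret:
  assumes "finite (profiles N S)"
  shows "CE_set N S u P = {x \<in> distributions N S.
    \<forall>p\<in>P. \<forall>a\<in>S p. \<forall>b\<in>S p. 0 \<le> (\<Sum>s\<in>profiles N S. x s * regret u p a b s)}"
proof -
  have regret_sum: "(\<Sum>s\<in>profiles N S. x s * regret u p a b s)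
      = (\<Sum>s\<in>{s\<in>profiles N S. s p = a}. x s * (u p s - u p (s(p := b))))" for x p a b
  proof -
    have "(\<Sum>s\<in>profiles N S. x s * regret u p a b s)
        = (\<Sum>s\<in>profiles N S. if s p = a then x s * (u p s - u p (s(p := b))) else 0)"
      by (rule sum.cong) (simp_all add: regret_def)
    then show ?thesis by (simp add: sum.inter_filter[OF assms])
  qed
  have diagonal: "(\<Sum>s\<in>profiles N S. x s * regret u p a a s) = 0" for x p a
    by simp
  show ?thesis
    unfolding CE_set_def regret_sum[symmetric] by (auto, metis diagonal order_refl)
qed

lemma sum_PiE_fun_upd_reindex:
  assumes "p \<in> N" "a \<in> S p" "b \<in> S p"
  shows "(\<Sum>s\<in>{s\<in>PiE N S. s p = a}. g (s(p := b))) = (\<Sum>t\<in>{t\<in>PiE N S. t p = b}. g t)"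
proof -
  have "bij_betw (\<lambda>s. s(p := b)) {s\<in>PiE N S. s p = a} {t\<in>PiE N S. t p = b}"
    by (rule bij_betw_byWitness[where f' = "\<lambda>t. t(p := a)"])
       (use assms in \<open>auto simp: PiE_iff extensional_def\<close>)
  then show ?thesis by (rule sum.reindex_bij_betw)
qed

definition mixed_payoff ::
  "'p set \<Rightarrow> ('p \<Rightarrow> 's set) \<Rightarrow> ('p \<Rightarrow> ('p \<Rightarrow> 's) \<Rightarrow> real) \<Rightarrow> ('p \<Rightarrow> 's \<Rightarrow> real) \<Rightarrow> 'p \<Rightarrow> 's \<Rightarrow> real"
  where "mixed_payoff N S u q p c = (\<Sum>t\<in>{t\<in>PiE N S. t p = c}. (\<Prod>r\<in>N - {p}. q r (t r)) * u p t)"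

lemma sum_product_regret:
  assumes N: "finite N" and p: "p \<in> N" and a: "a \<in> S p" and b: "b \<in> S p"
    and S: "\<And>r. r \<in> N \<Longrightarrow> finite (S r)"
  shows "(\<Sum>s\<in>PiE N S. (\<Prod>r\<in>N. q r (s r)) * regret u p a b s)
       = q p a * (mixed_payoff N S u q p a - mixed_payoff N S u q p b)"
proof -
  define R where "R s = (\<Prod>r\<in>N - {p}. q r (s r))" for s
  have Q_split: "(\<Prod>r\<in>N. q r (s r)) = q p (s p) * R s" for s
    unfolding R_def by (rule prod.remove[OF N p])
  have R_upd: "R (s(p := c)) = R s" for s c
    unfolding R_def by (rule prod.cong) auto
  have fin: "finite (PiE N S)" using N S by (simp add: finite_PiE)
  have "(\<Sum>s\<in>PiE N S. (\<Prod>r\<in>N. q r (s r)) * regret u p a b s)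
      = (\<Sum>s\<in>PiE N S. if s p = a
          then q p a * (R s * u p s) - q p a * (R (s(p := b)) * u p (s(p := b))) else 0)"
    by (rule sum.cong) (auto simp: regret_def Q_split R_upd algebra_simps)
  also have "\<dots> = (\<Sum>s\<in>{s\<in>PiE N S. s p = a}.
      q p a * (R s * u p s) - q p a * (R (s(p := b)) * u p (s(p := b))))"
    by (rule sum.inter_filter[OF fin, symmetric])
  also have "\<dots> = q p a * (\<Sum>s\<in>{s\<in>PiE N S. s p = a}. R s * u p s)
      - q p a * (\<Sum>s\<in>{s\<in>PiE N S. s p = a}. R (s(p := b)) * u p (s(p := b)))"
    by (simp only: sum_subtractf sum_distrib_left)
  also have "(\<Sum>s\<in>{s\<in>PiE N S. s p = a}. R (s(p := b)) * u p (s(p := b)))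
      = mixed_payoff N S u q p b"
    unfolding mixed_payoff_def R_def[symmetric]
    by (rule sum_PiE_fun_upd_reindex[where N = N and S = S, OF p a b])
  finally show ?thesis by (simp add: mixed_payoff_def R_def right_diff_distrib)
qed

text \<open>Flow balance makes the payoff of every strategy enter with equal inflow and outflow.\<close>
lemma sum_weighted_regret_flow_balanced:
  assumes N: "finite N" and p: "p \<in> N" and S: "\<And>r. r \<in> N \<Longrightarrow> finite (S r)"
    and bal: "flow_balanced (S p) w (q p)"
  shows "(\<Sum>(a, b)\<in>S p \<times> S p. w a b * (\<Sum>s\<in>PiE N S. (\<Prod>r\<in>N. q r (s r)) * regret u p a b s)) = 0"
proof -
  let ?H = "mixed_payoff N S u q p"
  have "(\<Sum>(a, b)\<in>S p \<times> S p. w a b * (\<Sum>s\<in>PiE N S. (\<Prod>r\<in>N. q r (s r)) * regret u p a b s))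
      = (\<Sum>a\<in>S p. \<Sum>b\<in>S p. w a b * (q p a * (?H a - ?H b)))"
    unfolding sum.cartesian_product[symmetric]
  proof (intro sum.cong refl)
    fix a b assume "a \<in> S p" "b \<in> S p"
    from sum_product_regret[where S = S, OF N p this S]
    show "w a b * (\<Sum>s\<in>PiE N S. (\<Prod>r\<in>N. q r (s r)) * regret u p a b s)
        = w a b * (q p a * (?H a - ?H b))"
      by simp
  qed
  also have "\<dots> = (\<Sum>a\<in>S p. \<Sum>b\<in>S p. ?H a * (q p a * w a b))
      - (\<Sum>a\<in>S p. \<Sum>b\<in>S p. ?H b * (q p a * w a b))"
    by (simp add: sum_subtractf algebra_simps)
  also have "(\<Sum>a\<in>S p. \<Sum>b\<in>S p. ?H b * (q p a * w a b)) = (\<Sum>b\<in>S p. ?H b * (\<Sum>a\<in>S p. q p a * w a b))"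
    by (subst sum.swap) (simp add: sum_distrib_left)
  also have "\<dots> = (\<Sum>b\<in>S p. ?H b * (q p b * (\<Sum>a\<in>S p. w b a)))"
    using bal by (intro sum.cong refl) (simp add: flow_balanced_def)
  also have "(\<Sum>a\<in>S p. \<Sum>b\<in>S p. ?H a * (q p a * w a b)) = (\<Sum>a\<in>S p. ?H a * (q p a * (\<Sum>b\<in>S p. w a b)))"
    by (simp add: sum_distrib_left)
  finally show ?thesis by simp
qed

lemma sum_PiE_prod_eq_1:
  assumes "finite N" "\<And>r. r \<in> N \<Longrightarrow> finite (S r)" "\<And>r. r \<in> N \<Longrightarrow> sum (q r) (S r) = 1"
  shows "(\<Sum>s\<in>PiE N S. \<Prod>r\<in>N. q r (s r)) = (1 :: real)"
  using prod_sum_PiE[where A = N and B = S and f = q] assms by simp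

text \<open>Averaging over the product of flow-balanced distributions of the chains \<open>w p\<close> gives
  weighted regret zero, so some profile has nonnegative weighted regret.\<close>
lemma ex_profile_weighted_regret_nonneg:
  assumes G: "finite_game N S"
    and w: "\<And>p a b. p \<in> N \<Longrightarrow> a \<in> S p \<Longrightarrow> b \<in> S p \<Longrightarrow> 0 \<le> w p a b"
  shows "\<exists>s\<in>profiles N S. 0 \<le> (\<Sum>p\<in>N. \<Sum>(a, b)\<in>S p \<times> S p. w p a b * regret u p a b s)"
proof (rule ccontr)
  have N: "finite N" and S: "\<And>p. p \<in> N \<Longrightarrow> finite (S p)" and S_ne: "\<And>p. p \<in> N \<Longrightarrow> S p \<noteq> {}"
    using G by (auto simp: finite_game_def)
  define F where "F s = (\<Sum>p\<in>N. \<Sum>(a, b)\<in>S p \<times> S p. w p a b * regret u p a b s)" for s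
  assume "\<not> (\<exists>s\<in>profiles N S. 0 \<le> (\<Sum>p\<in>N. \<Sum>(a, b)\<in>S p \<times> S p. w p a b * regret u p a b s))"
  then have F_neg: "F s < 0" if "s \<in> PiE N S" for s
    using that unfolding F_def profiles_def by (simp add: not_le)
  have "\<exists>q. q \<in> prob_simplex (S p) \<and> flow_balanced (S p) (w p) q" if "p \<in> N" for p
    using flow_balanced_distribution_exists[of "S p" "w p"] S[OF that] S_ne[OF that] w[OF that]
    by blast
  then have "\<forall>p\<in>N. \<exists>q. q \<in> prob_simplex (S p) \<and> flow_balanced (S p) (w p) q" by blast
  from bchoice[OF this] obtain q
    where "\<forall>p\<in>N. q p \<in> prob_simplex (S p) \<and> flow_balanced (S p) (w p) (q p)"
    by blast
  then have q: "\<And>p. p \<in> N \<Longrightarrow> q p \<in> prob_simplex (S p)"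
    and bal: "\<And>p. p \<in> N \<Longrightarrow> flow_balanced (S p) (w p) (q p)"
    by blast+
  define Q where "Q s = (\<Prod>r\<in>N. q r (s r))" for s
  have "(\<Sum>s\<in>PiE N S. Q s * F s) < 0"
  proof (rule sum_prob_weights_neg[OF finite_profiles[OF G] profiles_nonempty[OF G],
        unfolded profiles_def])
    show "\<forall>s\<in>PiE N S. 0 \<le> Q s"
      using q by (auto simp: Q_def PiE_iff prob_simplex_def intro!: prod_nonneg)
    show "sum Q (PiE N S) = 1"
      unfolding Q_def using q by (intro sum_PiE_prod_eq_1[OF N S]) (auto simp: prob_simplex_def)
  qed (rule F_neg)
  moreover have "(\<Sum>s\<in>PiE N S. Q s * F s) = 0"
  proof -
    have "(\<Sum>s\<in>PiE N S. Q s * F s)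
        = (\<Sum>s\<in>PiE N S. \<Sum>p\<in>N. \<Sum>ab\<in>S p \<times> S p. Q s * (case ab of (a, b) \<Rightarrow> w p a b * regret u p a b s))"
      by (simp add: F_def sum_distrib_left)
    also have "\<dots> = (\<Sum>p\<in>N. \<Sum>ab\<in>S p \<times> S p. \<Sum>s\<in>PiE N S.
        Q s * (case ab of (a, b) \<Rightarrow> w p a b * regret u p a b s))"
      by (subst sum.swap, intro sum.cong refl, rule sum.swap)
    also have "\<dots> = (\<Sum>p\<in>N. \<Sum>(a, b)\<in>S p \<times> S p.
        w p a b * (\<Sum>s\<in>PiE N S. (\<Prod>r\<in>N. q r (s r)) * regret u p a b s))"
      unfolding Q_def
      by (intro sum.cong refl) (simp add: sum_distrib_left mult.left_commute split: prod.split)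
    also have "\<dots> = 0"
    proof (rule sum.neutral, rule ballI)
      fix p assume p: "p \<in> N"
      show "(\<Sum>(a, b)\<in>S p \<times> S p. w p a b * (\<Sum>s\<in>PiE N S. (\<Prod>r\<in>N. q r (s r)) * regret u p a b s)) = 0"
        by (rule sum_weighted_regret_flow_balanced[where S = S and q = q, OF N p S bal[OF p]])
    qed
    finally show ?thesis .
  qed
  ultimately show False by simp
qed

lemma CE_set_nonempty:
  assumes G: "finite_game N S"
  shows "CE_set N S u N \<noteq> {}"
proof -
  have N: "finite N" and S: "\<And>p. p \<in> N \<Longrightarrow> finite (S p)"
    using G by (auto simp: finite_game_def)
  define I where "I = Sigma N (\<lambda>p. S p \<times> S p)"
  have I: "finite I" unfolding I_def using N S by (auto intro!: finite_SigmaI)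
  define A where "A = (\<lambda>(p, a, b). regret u p a b)"
  have A_sum: "(\<Sum>i\<in>I. w i * A i s)
      = (\<Sum>p\<in>N. \<Sum>(a, b)\<in>S p \<times> S p. w (p, a, b) * regret u p a b s)" for w s
  proof -
    have "(\<Sum>i\<in>I. w i * A i s) = (\<Sum>(p, ab)\<in>I. w (p, ab) * A (p, ab) s)"
      by (simp add: case_prod_unfold)
    also have "\<dots> = (\<Sum>p\<in>N. \<Sum>ab\<in>S p \<times> S p. w (p, ab) * A (p, ab) s)"
      unfolding I_def by (rule sum.Sigma[symmetric]) (use N S in auto)
    finally show ?thesis by (simp add: A_def case_prod_unfold)
  qed
  from ville_alternative[OF finite_profiles[OF G] profiles_nonempty[OF G] I, of A] show ?thesis
  proof
    assume "\<exists>x\<in>prob_simplex (profiles N S). \<forall>i\<in>I. 0 \<le> (\<Sum>s\<in>profiles N S. A i s * x s)"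
    then obtain x where "x \<in> prob_simplex (profiles N S)"
      and "\<forall>i\<in>I. 0 \<le> (\<Sum>s\<in>profiles N S. A i s * x s)" by blast
    then have "x \<in> CE_set N S u N"
      by (auto simp: CE_set_eq_regret[OF finite_profiles[OF G]] distributions_eq_prob_simplex
          I_def A_def mult.commute)
    then show ?thesis by blast
  next
    assume "\<exists>w. (\<forall>i\<in>I. 0 \<le> w i) \<and> (\<forall>s\<in>profiles N S. (\<Sum>i\<in>I. w i * A i s) < 0)"
    then obtain w where w: "\<forall>i\<in>I. 0 \<le> w i"
      and w_neg: "\<forall>s\<in>profiles N S. (\<Sum>i\<in>I. w i * A i s) < 0" by blast
    have "0 \<le> w (p, a, b)" if "p \<in> N" "a \<in> S p" "b \<in> S p" for p a b
      using w that by (simp add: I_def)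
    then obtain s where "s \<in> profiles N S"
      and "0 \<le> (\<Sum>p\<in>N. \<Sum>(a, b)\<in>S p \<times> S p. w (p, a, b) * regret u p a b s)"
      using ex_profile_weighted_regret_nonneg[OF G, of "\<lambda>p a b. w (p, a, b)" u] by blast
    with w_neg show ?thesis unfolding A_sum by fastforce
  qed
qed

section \<open>Stackelberg correlated equilibria\<close>

lemma CE_set_antimono: "P \<subseteq> P' \<Longrightarrow> CE_set N S u P' \<subseteq> CE_set N S u P"
  by (auto simp: CE_set_def)

lemma compact_CE_set:
  assumes G: "finite_game N S"
  shows "compact (CE_set N S u P)"
proof -
  define J where "J = Sigma P (\<lambda>p. S p \<times> S p)"
  define g where "g = (\<lambda>(p, a, b) x. \<Sum>s\<in>profiles N S. x s * regret u p a b s)"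
  have "CE_set N S u P = prob_simplex (profiles N S) \<inter> {x. \<forall>i\<in>J. 0 \<le> g i x}"
    by (auto simp: CE_set_eq_regret[OF finite_profiles[OF G]] distributions_eq_prob_simplex
        J_def g_def)
  moreover have "closed {x. \<forall>i\<in>J. 0 \<le> g i x}"
    by (rule closed_Collect_ball_nonneg)
      (auto simp: g_def split: prod.split intro!: continuous_intros)
  ultimately show ?thesis
    using compact_prob_simplex[OF finite_profiles[OF G]] by (simp add: compact_Int_closed)
qed

lemma compact_SG_X:
  assumes "finite_game N S"
  shows "compact (SG_X N S u L F)"
proof -
  define K where
    "K \<pi> = (if \<pi> \<in> ordered_subsets L then CE_set N S u (set \<pi> \<union> F) else {undefined})" for \<pi>
  have "SG_X N S u L F = {x. \<forall>\<pi>. x \<pi> \<in> K \<pi>}"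
    by (auto simp: SG_X_def K_def PiE_def Pi_def extensional_def)
  moreover have "compact {x. \<forall>\<pi>. x \<pi> \<in> K \<pi>}"
    by (rule compact_fun_box) (auto simp: K_def compact_CE_set[OF assms])
  ultimately show ?thesis by simp
qed

lemma closed_stable_at: "closed {x. stable_at N S u L x \<pi>}"
proof -
  have "{x. stable_at N S u L x \<pi>}
      = {x. \<forall>p\<in>L - set \<pi>. 0 \<le> exp_util N S u p (x \<pi>) - exp_util N S u p (x (\<pi> @ [p]))}"
    by (auto simp: stable_at_def)
  moreover have "closed \<dots>"
    by (rule closed_Collect_ball_nonneg) (auto simp: exp_util_def intro!: continuous_intros)
  ultimately show ?thesis by simp
qed

lemma compact_SG_XS: "finite_game N S \<Longrightarrow> compact (SG_XS N S u L F)"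
  using compact_Int_closed[OF compact_SG_X closed_stable_at]
  by (simp add: SG_XS_def Collect_conj_eq)

lemma compact_SG_XPS: "finite_game N S \<Longrightarrow> compact (SG_XPS N S u L F)"
proof -
  have "SG_XPS N S u L F = SG_X N S u L F \<inter> (\<Inter>\<pi>\<in>ordered_subsets L. {x. stable_at N S u L x \<pi>})"
    by (auto simp: SG_XPS_def)
  then show "finite_game N S \<Longrightarrow> ?thesis"
    by (auto intro!: compact_Int_closed compact_SG_X closed_INT closed_stable_at)
qed

lemma SG_XPS_subset_SG_XS: "SG_XPS N S u L F \<subseteq> SG_XS N S u L F"
  by (auto simp: SG_XPS_def SG_XS_def ordered_subsets_def)

lemma constant_CE_in_SG_XPS:
  assumes "y \<in> CE_set N S u N" and "L \<union> F = N"
  shows "restrict (\<lambda>_. y) (ordered_subsets L) \<in> SG_XPS N S u L F"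
proof -
  have "y \<in> CE_set N S u (set \<pi> \<union> F)" if "\<pi> \<in> ordered_subsets L" for \<pi>
    using CE_set_antimono[of "set \<pi> \<union> F" N] assms that by (auto simp: ordered_subsets_def)
  moreover have "\<pi> @ [p] \<in> ordered_subsets L" if "\<pi> \<in> ordered_subsets L" "p \<in> L - set \<pi>" for \<pi> p
    using that by (auto simp: ordered_subsets_def)
  ultimately show ?thesis by (auto simp: SG_XPS_def SG_X_def stable_at_def)
qed

text \<open>A maximiser of the leaders' total utility at node \<open>\<pi>\<close> is Pareto optimal.\<close>
lemma ex_pareto_if_compact:
  fixes K :: "('p list \<Rightarrow> ('p \<Rightarrow> 's) \<Rightarrow> real) set"
  assumes "compact K" "K \<noteq> {}" "finite L"
  shows "\<exists>x\<in>K. x \<pi> \<in> pareto N S u L \<pi> K"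
proof -
  define total where "total x = (\<Sum>p\<in>L - set \<pi>. exp_util N S u p (x \<pi>))"
    for x :: "'p list \<Rightarrow> ('p \<Rightarrow> 's) \<Rightarrow> real"
  have "continuous_on K total"
    unfolding total_def exp_util_def by (intro continuous_intros)
  then obtain x where x: "x \<in> K" and x_max: "\<And>y. y \<in> K \<Longrightarrow> total y \<le> total x"
    using continuous_attains_sup[OF assms(1,2)] by blast
  have "x \<pi> \<in> pareto N S u L \<pi> K"
    unfolding pareto_def
  proof (intro CollectI conjI notI)
    show "x \<pi> \<in> (\<lambda>x'. x' \<pi>) ` K" using x by blast
    assume "\<exists>y'\<in>(\<lambda>x'. x' \<pi>) ` K.
      (\<forall>p\<in>L - set \<pi>. exp_util N S u p (x \<pi>) \<le> exp_util N S u p y') \<and>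
      (\<exists>p\<in>L - set \<pi>. exp_util N S u p (x \<pi>) < exp_util N S u p y')"
    then obtain y where y: "y \<in> K"
      and ge: "\<forall>p\<in>L - set \<pi>. exp_util N S u p (x \<pi>) \<le> exp_util N S u p (y \<pi>)"
      and gt: "\<exists>p\<in>L - set \<pi>. exp_util N S u p (x \<pi>) < exp_util N S u p (y \<pi>)" by blast
    have "total x < total y" unfolding total_def
      using assms(3) ge gt by (intro sum_strict_mono_ex1) auto
    with x_max[OF y] show False by simp
  qed
  with x show ?thesis by blast
qed

theorem theorem1:
  fixes N :: "'p set" and S :: "'p \<Rightarrow> 's set" and u :: "'p \<Rightarrow> ('p \<Rightarrow> 's) \<Rightarrow> real"
    and L F :: "'p set"
  assumes "finite_game N S"
    and "L \<union> F = N" and "L \<inter> F = {}"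
  shows "SCE_set N S u L F \<noteq> {} \<and> SCE_PA_set N S u L F \<noteq> {}"
proof -
  have "finite L" using assms(1,2) by (auto simp: finite_game_def intro: finite_subset)
  obtain y where "y \<in> CE_set N S u N" using CE_set_nonempty[OF assms(1)] by blast
  then have XPS: "SG_XPS N S u L F \<noteq> {}" using constant_CE_in_SG_XPS[OF _ assms(2)] by blast
  then have XS: "SG_XS N S u L F \<noteq> {}" using SG_XPS_subset_SG_XS by blast
  obtain x\<^sub>1 where "x\<^sub>1 \<in> SG_XS N S u L F" "x\<^sub>1 [] \<in> pareto N S u L [] (SG_XS N S u L F)"
    using ex_pareto_if_compact[OF compact_SG_XS[OF assms(1)] XS \<open>finite L\<close>] by blast
  then have "x\<^sub>1 \<in> SCE_set N S u L F" by (simp add: SCE_set_def)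
  moreover obtain x\<^sub>2 where "x\<^sub>2 \<in> SG_XPS N S u L F" "x\<^sub>2 [] \<in> pareto N S u L [] (SG_XPS N S u L F)"
    using ex_pareto_if_compact[OF compact_SG_XPS[OF assms(1)] XPS \<open>finite L\<close>] by blast
  then have "x\<^sub>2 \<in> SCE_PA_set N S u L F" by (simp add: SCE_PA_set_def)
  ultimately show ?thesis by blast
qed

end
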